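(* Fix $d\ge1$ and a finite set $C$ of colours. There is a simple interpretation $J=(\nu(x),\eta(x,y))$ given by first-order formulas such that for every graph $G$ having a tree-model $T$ of depth $d$ with colours from $C$, $G\simeq T_1^J$, where $T_1$ is the labelled tree associated with $T$ as described below. That is, a shrub interpretation is FO definable for each fixed $d$.
   Context: A graph $G$ has a tree-model of $m$ colours and depth $d$ if there is a rooted tree $T$ such that: the set of leaves of $T$ is exactly $V(G)$; every root-to-leaf path has length exactly $d$; each leaf is assigned one of $m$ colours; and whether $uv\in E(G)$ depends solely on the colours of $u,v$ and the distance between $u,v$ in $T$. For such $T$, the labelled tree $T_1$ is $T$ with the leaf colours as labels, where additionally each leaf $v$ gets every label $(i,c)$ such that some vertex $u$ of colour $c$ adjacent to $v$ in $G$ has distance $2i$ from $v$ in $T$. A simple interpretation $(\nu,\eta)$ assigns to a labelled tree $T_1$ the graph $T_1^J$ with vertex set $\{a:T_1\models\nu(a)\}$ and edge set $\{ab: T_1\models\eta(a,b)\}$; a shrub interpretation is such an interpretation with $T_1^J\simeq G$, the vertices being the leaves. *)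

theory Defs
  imports Main
begin

definition walk :: "('a \<Rightarrow> 'a \<Rightarrow> bool) \<Rightarrow> 'a list \<Rightarrow> bool" where
  "walk E p \<longleftrightarrow> (\<forall>i. Suc i < length p \<longrightarrow> E (p ! i) (p ! Suc i))"

definition simple_path :: "('a \<Rightarrow> 'a \<Rightarrow> bool) \<Rightarrow> 'a list \<Rightarrow> 'a \<Rightarrow> 'a \<Rightarrow> bool" where
  "simple_path E p u v \<longleftrightarrow> p \<noteq> [] \<and> hd p = u \<and> last p = v \<and> distinct p \<and> walk E p"

definition is_tree :: "'a set \<Rightarrow> ('a \<Rightarrow> 'a \<Rightarrow> bool) \<Rightarrow> bool" where
  "is_tree V E \<longleftrightarrow> finite V \<and> V \<noteq> {}
     \<and> (\<forall>u v. E u v \<longrightarrow> u \<in> V \<and> v \<in> V)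
     \<and> (\<forall>u v. E u v \<longrightarrow> E v u) \<and> (\<forall>u. \<not> E u u)
     \<and> (\<forall>u\<in>V. \<forall>v\<in>V. \<exists>!p. simple_path E p u v)"

definition tdist :: "('a \<Rightarrow> 'a \<Rightarrow> bool) \<Rightarrow> 'a \<Rightarrow> 'a \<Rightarrow> nat" where
  "tdist E u v = (LEAST n. \<exists>p. length p = Suc n \<and> hd p = u \<and> last p = v \<and> walk E p)"

definition nbrs :: "'a set \<Rightarrow> ('a \<Rightarrow> 'a \<Rightarrow> bool) \<Rightarrow> 'a \<Rightarrow> 'a set" where
  "nbrs V E v = {w \<in> V. E v w}"

definition rleaves :: "'a set \<Rightarrow> ('a \<Rightarrow> 'a \<Rightarrow> bool) \<Rightarrow> 'a \<Rightarrow> 'a set" where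
  "rleaves V E r = {v \<in> V. if v = r then nbrs V E v = {} else card (nbrs V E v) = 1}"

definition is_graph :: "'a set \<Rightarrow> ('a \<Rightarrow> 'a \<Rightarrow> bool) \<Rightarrow> bool" where
  "is_graph V E \<longleftrightarrow> (\<forall>u v. E u v \<longrightarrow> u \<in> V \<and> v \<in> V \<and> E v u \<and> u \<noteq> v)"

definition tree_model ::
  "nat \<Rightarrow> 'c set \<Rightarrow> 'a set \<Rightarrow> ('a \<Rightarrow> 'a \<Rightarrow> bool) \<Rightarrow> 'a set \<Rightarrow> ('a \<Rightarrow> 'a \<Rightarrow> bool) \<Rightarrow> 'a \<Rightarrow> ('a \<Rightarrow> 'c) \<Rightarrow> bool" where
  "tree_model d C VG EG VT ET r col \<longleftrightarrow>
     is_tree VT ET \<and> r \<in> VT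
     \<and> rleaves VT ET r = VG
     \<and> (\<forall>v\<in>VG. tdist ET r v = d)
     \<and> (\<forall>v\<in>VG. col v \<in> C)
     \<and> (\<exists>M :: 'c \<Rightarrow> 'c \<Rightarrow> nat \<Rightarrow> bool. \<forall>u\<in>VG. \<forall>v\<in>VG. u \<noteq> v \<longrightarrow>
          (EG u v \<longleftrightarrow> M (col u) (col v) (tdist ET u v)))"

datatype 'c label = Col 'c | Dist nat 'c

definition T1_labels ::
  "'a set \<Rightarrow> ('a \<Rightarrow> 'a \<Rightarrow> bool) \<Rightarrow> ('a \<Rightarrow> 'a \<Rightarrow> bool) \<Rightarrow> ('a \<Rightarrow> 'c) \<Rightarrow> 'a \<Rightarrow> 'c label set" where
  "T1_labels VG EG ET col v =
     (if v \<in> VG then {Col (col v)} \<union>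
        {Dist i c | i c. \<exists>u\<in>VG. EG v u \<and> col u = c \<and> tdist ET u v = 2 * i}
      else {})"

datatype 'c fm =
    Adj nat nat
  | Eq nat nat
  | Lab "'c label" nat
  | Neg "'c fm"
  | Conj "'c fm" "'c fm"
  | Ex nat "'c fm"

fun sat :: "'a set \<Rightarrow> ('a \<Rightarrow> 'a \<Rightarrow> bool) \<Rightarrow> ('a \<Rightarrow> 'c label set) \<Rightarrow> (nat \<Rightarrow> 'a) \<Rightarrow> 'c fm \<Rightarrow> bool" where
  "sat V E L s (Adj x y) = E (s x) (s y)"
| "sat V E L s (Eq x y) = (s x = s y)"
| "sat V E L s (Lab l x) = (l \<in> L (s x))"
| "sat V E L s (Neg f) = (\<not> sat V E L s f)"
| "sat V E L s (Conj f g) = (sat V E L s f \<and> sat V E L s g)"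
| "sat V E L s (Ex x f) = (\<exists>a\<in>V. sat V E L (s(x := a)) f)"

end

theory Submission
  imports Defs
begin

text \<open>
  Since adjacency in G depends only on the two colours and the tree distance, leaves a \<noteq> b are
  adjacent iff a carries the label (dist(a,b)/2, col b): a neighbour u of a with the colour of b at
  the same distance as b has exactly the adjacency type of b. All leaves lie at depth d, so leaf
  distances are even (tree distances to the root change by one along every edge) and at most 2d.
  Hence the edge formula is a finite disjunction over colours c and i \<le> d of
  "b has colour c, a has label (i, c) and dist(a,b) = 2i", where a fixed distance is first-order
  via formulas describing walks of fixed length; the vertex formula says "carries a colour".
\<close>

lemma walk_Nil [simp]: "walk E []"
  and walk_singleton [simp]: "walk E [x]"
  by (simp_all add: walk_def)

lemma walk_Cons2 [simp]: "walk E (x # y # xs) \<longleftrightarrow> E x y \<and> walk E (y # xs)"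
  unfolding walk_def by (auto simp: nth_Cons split: nat.splits)

lemma walk_Cons: "walk E (x # p) \<longleftrightarrow> walk E p \<and> (p \<noteq> [] \<longrightarrow> E x (hd p))"
  by (cases p) auto

lemma walk_append:
  "walk E (xs @ ys) \<longleftrightarrow> walk E xs \<and> walk E ys \<and> (xs \<noteq> [] \<and> ys \<noteq> [] \<longrightarrow> E (last xs) (hd ys))"
  by (induction xs) (auto simp: walk_Cons)

lemma walk_rev: "\<forall>u v. E u v \<longrightarrow> E v u \<Longrightarrow> walk E (rev p) \<longleftrightarrow> walk E p"
  by (induction p) (auto simp: walk_Cons walk_append hd_rev last_rev)

lemma walk_shorten_distinct:
  assumes "walk E p" "p \<noteq> []"
  shows "\<exists>q. distinct q \<and> walk E q \<and> hd q = hd p \<and> last q = last p \<and> q \<noteq> [] \<and> length q \<le> length p"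
  using assms
proof (induction p rule: length_induct)
  case (1 p)
  show ?case
  proof (cases "distinct p")
    case False
    then obtain xs y ys zs where p: "p = xs @ [y] @ ys @ [y] @ zs"
      using not_distinct_decomp by blast
    define p' where "p' = xs @ [y] @ zs"
    have "walk E (xs @ [y])"
      using "1.prems"(1) unfolding p by (simp add: walk_append)
    moreover have "walk E (y # zs)"
      using "1.prems"(1) walk_append[of E "xs @ y # ys" "y # zs"] unfolding p by simp
    ultimately have "walk E p'"
      unfolding p'_def by (cases zs) (auto simp: walk_append)
    moreover have "hd p' = hd p" "last p' = last p" "length p' < length p"
      unfolding p p'_def by (cases xs; simp) (cases zs; simp)+
    ultimately show ?thesis
      using "1.IH" unfolding p'_def by fastforce
  qed (use 1 in blast)
qed

definition walk_betw :: "('a \<Rightarrow> 'a \<Rightarrow> bool) \<Rightarrow> nat \<Rightarrow> 'a \<Rightarrow> 'a \<Rightarrow> bool" where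
  "walk_betw E n u v \<longleftrightarrow> (\<exists>p. length p = Suc n \<and> hd p = u \<and> last p = v \<and> walk E p)"

lemma tdist_eq_Least: "tdist E u v = (LEAST n. walk_betw E n u v)"
  by (simp add: tdist_def walk_betw_def)

lemma walk_betw_0 [simp]: "walk_betw E 0 u v \<longleftrightarrow> u = v"
  unfolding walk_betw_def by (auto simp: length_Suc_conv)

lemma walk_betw_Suc: "walk_betw E (Suc n) u v \<longleftrightarrow> (\<exists>w. E u w \<and> walk_betw E n w v)"
proof
  assume "walk_betw E (Suc n) u v"
  then obtain p where p: "length p = Suc n" "last (u # p) = v" "walk E (u # p)"
    unfolding walk_betw_def by (metis length_Suc_conv list.sel(1))
  then have "p \<noteq> []" by auto
  with p show "\<exists>w. E u w \<and> walk_betw E n w v"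
    unfolding walk_betw_def by (auto simp: walk_Cons)
next
  assume "\<exists>w. E u w \<and> walk_betw E n w v"
  then obtain w p where "E u w" "length p = Suc n" "hd p = w" "last p = v" "walk E p"
    unfolding walk_betw_def by blast
  then show "walk_betw E (Suc n) u v"
    unfolding walk_betw_def by (intro exI[of _ "u # p"]) (auto simp: walk_Cons)
qed

lemma walk_betw_1: "walk_betw E 1 u v \<longleftrightarrow> E u v"
  by (simp add: walk_betw_Suc)

lemma walk_betw_trans: "walk_betw E n u v \<Longrightarrow> walk_betw E m v w \<Longrightarrow> walk_betw E (n + m) u w"
  by (induction n arbitrary: u) (auto simp: walk_betw_Suc)

lemma walk_betw_sym:
  assumes "\<forall>u v. E u v \<longrightarrow> E v u" "walk_betw E n u v"
  shows "walk_betw E n v u"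
proof -
  obtain p where "length p = Suc n" "hd p = u" "last p = v" "walk E p"
    using assms(2) unfolding walk_betw_def by blast
  with assms(1) show ?thesis
    unfolding walk_betw_def by (intro exI[of _ "rev p"]) (auto simp: walk_rev hd_rev last_rev)
qed

lemma tdist_le: "walk_betw E n u v \<Longrightarrow> tdist E u v \<le> n"
  unfolding tdist_eq_Least by (rule Least_le)

lemma walk_betw_tdist: "walk_betw E n u v \<Longrightarrow> walk_betw E (tdist E u v) u v"
  unfolding tdist_eq_Least by (rule LeastI)

lemma tdist_sym: "\<forall>u v. E u v \<longrightarrow> E v u \<Longrightarrow> tdist E u v = tdist E v u"
  unfolding tdist_eq_Least by (metis walk_betw_sym)

lemma tdist_triangle:
  assumes "walk_betw E n u v" "walk_betw E m v w"
  shows "tdist E u w \<le> tdist E u v + tdist E v w"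
  by (rule tdist_le, rule walk_betw_trans[OF walk_betw_tdist[OF assms(1)] walk_betw_tdist[OF assms(2)]])

lemma tdist_le_index:
  assumes "walk E p" "j < length p"
  shows "tdist E (hd p) (p ! j) \<le> j"
proof (rule tdist_le)
  have "walk E (take (Suc j) p)"
    using assms(1) walk_append[of E "take (Suc j) p" "drop (Suc j) p"] by simp
  moreover have "hd (take (Suc j) p) = hd p" "last (take (Suc j) p) = p ! j"
    using assms(2) by (simp add: hd_take, simp add: take_Suc_conv_app_nth)
  ultimately show "walk_betw E j (hd p) (p ! j)"
    unfolding walk_betw_def using assms(2) by (intro exI[of _ "take (Suc j) p"]) auto
qed

lemma shortest_walk_distinct:
  assumes "walk_betw E n u v"
  obtains q where "distinct q" "walk E q" "hd q = u" "last q = v" "length q = Suc (tdist E u v)"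
proof -
  obtain p where p: "length p = Suc (tdist E u v)" "hd p = u" "last p = v" "walk E p"
    using walk_betw_tdist[OF assms] unfolding walk_betw_def by blast
  then obtain q where q: "distinct q" "walk E q" "hd q = u" "last q = v" "q \<noteq> []" "length q \<le> length p"
    using walk_shorten_distinct[of E p] by fastforce
  then have "walk_betw E (length q - 1) u v"
    unfolding walk_betw_def by (intro exI[of _ q]) auto
  then have "tdist E u v \<le> length q - 1"
    by (rule tdist_le)
  with q p(1) have "length q = Suc (tdist E u v)"
    by (cases q) auto
  with q that show ?thesis by blast
qed

lemma tree_walk_betw:
  assumes "is_tree V E" "u \<in> V" "v \<in> V"
  shows "\<exists>n. walk_betw E n u v"
proof -
  obtain p where "simple_path E p u v"
    using assms unfolding is_tree_def by blast
  then show ?thesis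
    unfolding simple_path_def walk_betw_def by (intro exI[of _ "length p - 1"] exI[of _ p]) auto
qed

lemma adjacent_depth_neq:
  assumes T: "is_tree V E" and r: "r \<in> V" and e: "E u v"
  shows "tdist E r u \<noteq> tdist E r v"
proof
  assume same: "tdist E r u = tdist E r v"
  have uv: "u \<in> V" "v \<in> V" "u \<noteq> v"
    using T e unfolding is_tree_def by metis+
  obtain q where q: "distinct q" "walk E q" "hd q = r" "last q = u" "length q = Suc (tdist E r u)"
    using tree_walk_betw[OF T r uv(1)] shortest_walk_distinct by metis
  obtain q' where q': "distinct q'" "walk E q'" "hd q' = r" "last q' = v" "length q' = Suc (tdist E r v)"
    using tree_walk_betw[OF T r uv(2)] shortest_walk_distinct by metis
  have "q \<noteq> []"
    using q(5) by auto
  show False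
  proof (cases "v \<in> set q")
    case True
    then obtain j where j: "j < length q" "q ! j = v"
      by (metis in_set_conv_nth)
    have "q ! tdist E r u = u"
      using q(4,5) \<open>q \<noteq> []\<close> by (simp add: last_conv_nth)
    with j uv(3) q(5) have "j < tdist E r u"
      by (cases "j = tdist E r u") auto
    moreover have "tdist E r v \<le> j"
      using tdist_le_index[OF q(2) j(1)] j(2) q(3) by simp
    ultimately show False
      using same by simp
  next
    case False
    with q e uv \<open>q \<noteq> []\<close> have "simple_path E (q @ [v]) r v"
      unfolding simple_path_def by (auto simp: walk_append)
    moreover have "simple_path E q' r v"
      unfolding simple_path_def using q' by auto
    ultimately have "q @ [v] = q'"
      using T r uv unfolding is_tree_def by blast
    then show False
      using q(5) q'(5) same by (metis length_append_singleton n_not_Suc_n)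
  qed
qed

lemma adjacent_depth:
  assumes T: "is_tree V E" and r: "r \<in> V" and e: "E u v"
  shows "tdist E r v = Suc (tdist E r u) \<or> tdist E r u = Suc (tdist E r v)"
proof -
  have "u \<in> V" "v \<in> V" "E v u"
    using T e unfolding is_tree_def by metis+
  then obtain n m where "walk_betw E n r u" "walk_betw E m r v"
    using tree_walk_betw[OF T r] by metis
  moreover have "walk_betw E 1 u v" "walk_betw E 1 v u"
    using e \<open>E v u\<close> by (simp_all only: walk_betw_1)
  ultimately have "tdist E r v \<le> tdist E r u + tdist E u v" "tdist E r u \<le> tdist E r v + tdist E v u"
    and "tdist E u v \<le> 1" "tdist E v u \<le> 1"
    by (simp_all add: tdist_triangle tdist_le)
  then show ?thesis
    using adjacent_depth_neq[OF T r e] by linarith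
qed

lemma walk_depth_parity:
  assumes T: "is_tree V E" and r: "r \<in> V"
  shows "walk E p \<Longrightarrow> p \<noteq> [] \<Longrightarrow> even (tdist E r (hd p) + tdist E r (last p) + (length p - 1))"
proof (induction p)
  case (Cons x p)
  show ?case
  proof (cases "p = []")
    case False
    with Cons.prems have "E x (hd p)" "walk E p"
      by (auto simp: walk_Cons)
    moreover note adjacent_depth[OF T r \<open>E x (hd p)\<close>]
    ultimately show ?thesis
      using Cons.IH False by (cases p) auto
  qed simp
qed simp

lemma tdist_even_if_same_depth:
  assumes T: "is_tree V E" and r: "r \<in> V" and "a \<in> V" "b \<in> V"
    and same: "tdist E r a = tdist E r b"
  shows "even (tdist E a b)"
proof -
  obtain p where p: "length p = Suc (tdist E a b)" "hd p = a" "last p = b" "walk E p"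
    using tree_walk_betw[OF T \<open>a \<in> V\<close> \<open>b \<in> V\<close>] walk_betw_tdist unfolding walk_betw_def by metis
  then have "p \<noteq> []"
    by auto
  with walk_depth_parity[OF T r p(4)] p same show ?thesis
    by simp
qed

lemma tree_model_leaf_tdist:
  assumes tm: "tree_model d C VG EG VT ET r col" and "a \<in> VG" "b \<in> VG"
  shows "even (tdist ET a b)" "tdist ET a b \<le> 2 * d"
proof -
  have T: "is_tree VT ET" and r: "r \<in> VT" and "a \<in> VT" "b \<in> VT"
    and depth: "tdist ET r a = d" "tdist ET r b = d"
    using tm assms(2,3) unfolding tree_model_def rleaves_def by auto
  have sym: "\<forall>u v. ET u v \<longrightarrow> ET v u"
    using T unfolding is_tree_def by blast
  show "even (tdist ET a b)"
    using tdist_even_if_same_depth[OF T r \<open>a \<in> VT\<close> \<open>b \<in> VT\<close>] depth by simp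
  obtain n m where "walk_betw ET n a r" "walk_betw ET m r b"
    using tree_walk_betw[OF T] r \<open>a \<in> VT\<close> \<open>b \<in> VT\<close> by metis
  then have "tdist ET a b \<le> tdist ET a r + tdist ET r b"
    by (rule tdist_triangle)
  with depth tdist_sym[OF sym, of a r] show "tdist ET a b \<le> 2 * d"
    by simp
qed

lemma Col_in_T1_labels [simp]:
  "Col c \<in> T1_labels VG EG ET col v \<longleftrightarrow> v \<in> VG \<and> c = col v"
  by (auto simp: T1_labels_def)

lemma Dist_in_T1_labels [simp]:
  "Dist i c \<in> T1_labels VG EG ET col v \<longleftrightarrow>
     v \<in> VG \<and> (\<exists>u\<in>VG. EG v u \<and> col u = c \<and> tdist ET u v = 2 * i)"
  by (auto simp: T1_labels_def)

lemma tree_model_adj_iff_Dist: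
  assumes G: "is_graph VG EG" and tm: "tree_model d C VG EG VT ET r col"
    and a: "a \<in> VG" and b: "b \<in> VG" and "a \<noteq> b"
  shows "EG a b \<longleftrightarrow> (\<exists>i\<le>d. Dist i (col b) \<in> T1_labels VG EG ET col a \<and> tdist ET a b = 2 * i)"
proof -
  obtain M where M: "\<forall>u\<in>VG. \<forall>v\<in>VG. u \<noteq> v \<longrightarrow>
      (EG u v \<longleftrightarrow> M (col u) (col v) (tdist ET u v))"
    using tm unfolding tree_model_def by blast
  have sym: "\<forall>u v. ET u v \<longrightarrow> ET v u"
    using tm unfolding tree_model_def is_tree_def by blast
  show ?thesis
  proof
    assume "EG a b"
    obtain i where "tdist ET a b = 2 * i"
      using tree_model_leaf_tdist(1)[OF tm a b] by (auto elim: evenE)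
    moreover have "i \<le> d"
      using tree_model_leaf_tdist(2)[OF tm a b] calculation by simp
    ultimately show "\<exists>i\<le>d. Dist i (col b) \<in> T1_labels VG EG ET col a \<and> tdist ET a b = 2 * i"
      using \<open>EG a b\<close> a b tdist_sym[OF sym, of b a] by auto
  next
    assume "\<exists>i\<le>d. Dist i (col b) \<in> T1_labels VG EG ET col a \<and> tdist ET a b = 2 * i"
    then obtain u where u: "u \<in> VG" "EG a u" "col u = col b" "tdist ET a u = tdist ET a b"
      using tdist_sym[OF sym, of a] by auto
    have "a \<noteq> u"
      using G u(2) unfolding is_graph_def by blast
    with M a u have "M (col a) (col b) (tdist ET a b)"
      by metis
    with M a b \<open>a \<noteq> b\<close> show "EG a b"
      by blast
  qed
qed

text \<open>The inner vertex of a walk of length n + 1 is bound to variable n + 2, which differs from the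
  end variables 0, 1 and from all variables bound further inside.\<close>
fun walk_fm :: "nat \<Rightarrow> nat \<Rightarrow> nat \<Rightarrow> 'c fm" where
  "walk_fm 0 x y = Eq x y"
| "walk_fm (Suc n) x y = Ex (n + 2) (Conj (Adj x (n + 2)) (walk_fm n (n + 2) y))"

lemma sat_walk_fm:
  assumes "\<forall>u v. E u v \<longrightarrow> u \<in> V \<and> v \<in> V" "y < 2" "x < 2 \<or> n + 2 \<le> x"
  shows "sat V E L s (walk_fm n x y) \<longleftrightarrow> walk_betw E n (s x) (s y)"
  using assms(3)
proof (induction n arbitrary: x s)
  case (Suc n)
  have "sat V E L s (walk_fm (Suc n) x y) \<longleftrightarrow>
      (\<exists>w\<in>V. E (s x) w \<and> sat V E L (s(n + 2 := w)) (walk_fm n (n + 2) y))"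
    using Suc.prems assms(2) by auto
  also have "\<dots> \<longleftrightarrow> (\<exists>w\<in>V. E (s x) w \<and> walk_betw E n w (s y))"
    using Suc.IH[of "n + 2"] Suc.prems assms(2) by auto
  also have "\<dots> \<longleftrightarrow> walk_betw E (Suc n) (s x) (s y)"
    using assms(1) by (auto simp: walk_betw_Suc)
  finally show ?case .
qed simp

fun disjs :: "'c fm list \<Rightarrow> 'c fm" where
  "disjs [] = Neg (Eq 0 0)"
| "disjs (f # fs) = Neg (Conj (Neg f) (Neg (disjs fs)))"

fun conjs :: "'c fm list \<Rightarrow> 'c fm" where
  "conjs [] = Eq 0 0"
| "conjs (f # fs) = Conj f (conjs fs)"

lemma sat_disjs [simp]: "sat V E L s (disjs fs) \<longleftrightarrow> (\<exists>f\<in>set fs. sat V E L s f)"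
  by (induction fs) auto

lemma sat_conjs [simp]: "sat V E L s (conjs fs) \<longleftrightarrow> (\<forall>f\<in>set fs. sat V E L s f)"
  by (induction fs) auto

definition dist_fm :: "nat \<Rightarrow> 'c fm" where
  "dist_fm n = Conj (walk_fm n 0 1) (conjs [Neg (walk_fm m 0 1). m \<leftarrow> [0..<n]])"

lemma sat_dist_fm:
  assumes EV: "\<forall>u v. E u v \<longrightarrow> u \<in> V \<and> v \<in> V" and conn: "\<exists>m. walk_betw E m (s 0) (s 1)"
  shows "sat V E L s (dist_fm n) \<longleftrightarrow> tdist E (s 0) (s 1) = n"
proof -
  have walk: "sat V E L s (walk_fm m 0 1) \<longleftrightarrow> walk_betw E m (s 0) (s 1)" for m
    using sat_walk_fm[OF EV, of 1 0] by simp
  have "sat V E L s (dist_fm n) \<longleftrightarrow> walk_betw E n (s 0) (s 1) \<and> (\<forall>m<n. \<not> walk_betw E m (s 0) (s 1))"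
    unfolding dist_fm_def by (auto simp: walk simp del: One_nat_def)
  also have "\<dots> \<longleftrightarrow> tdist E (s 0) (s 1) = n"
    unfolding tdist_eq_Least using conn
    by (metis (mono_tags, lifting) LeastI Least_equality Least_le leD not_le_imp_less)
  finally show ?thesis .
qed

definition vertex_fm :: "'c list \<Rightarrow> 'c fm" where
  "vertex_fm cs = disjs [Lab (Col c) 0. c \<leftarrow> cs]"

definition edge_fm :: "nat \<Rightarrow> 'c list \<Rightarrow> 'c fm" where
  "edge_fm d cs = disjs [Conj (Lab (Col c) 1) (Conj (Lab (Dist i c) 0) (dist_fm (2 * i))).
     c \<leftarrow> cs, i \<leftarrow> [0..<Suc d]]"

lemma sat_vertex_fm: "sat V E L s (vertex_fm cs) \<longleftrightarrow> (\<exists>c\<in>set cs. Col c \<in> L (s 0))"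
  by (auto simp: vertex_fm_def)

lemma sat_edge_fm:
  assumes "\<forall>u v. E u v \<longrightarrow> u \<in> V \<and> v \<in> V" "\<exists>m. walk_betw E m (s 0) (s 1)"
  shows "sat V E L s (edge_fm d cs) \<longleftrightarrow>
    (\<exists>c\<in>set cs. \<exists>i\<le>d. Col c \<in> L (s 1) \<and> Dist i c \<in> L (s 0) \<and> tdist E (s 0) (s 1) = 2 * i)"
  using sat_dist_fm[OF assms] by (auto simp: edge_fm_def less_Suc_eq_le)

lemma tree_model_vertex_fm:
  assumes "tree_model d C VG EG VT ET r col" "set cs = C"
  shows "{a \<in> VT. sat VT ET (T1_labels VG EG ET col) (\<lambda>_. a) (vertex_fm cs)} = VG"
  using assms unfolding tree_model_def rleaves_def by (auto simp: sat_vertex_fm)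

lemma tree_model_edge_fm:
  assumes G: "is_graph VG EG" and tm: "tree_model d C VG EG VT ET r col" and cs: "set cs = C"
    and a: "a \<in> VG" and b: "b \<in> VG" and "a \<noteq> b"
  shows "EG a b \<longleftrightarrow> sat VT ET (T1_labels VG EG ET col) (\<lambda>i. if i = 0 then a else b) (edge_fm d cs)"
proof -
  have T: "is_tree VT ET" and "a \<in> VT" "b \<in> VT" and "col b \<in> C"
    using tm a b unfolding tree_model_def rleaves_def by auto
  have EV: "\<forall>u v. ET u v \<longrightarrow> u \<in> VT \<and> v \<in> VT"
    using T unfolding is_tree_def by blast
  let ?s = "\<lambda>i :: nat. if i = 0 then a else b"
  have conn: "\<exists>m. walk_betw ET m (?s 0) (?s 1)"
    using tree_walk_betw[OF T \<open>a \<in> VT\<close> \<open>b \<in> VT\<close>] by simp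
  from \<open>col b \<in> C\<close> cs b show ?thesis
    unfolding tree_model_adj_iff_Dist[OF G tm a b \<open>a \<noteq> b\<close>] sat_edge_fm[OF EV conn] by auto
qed

theorem lemma4:
  fixes d :: nat and C :: "'c set"
  assumes "d \<ge> 1" and "finite C"
  shows "\<exists>\<nu> \<eta> :: 'c fm.
    \<forall>(VG :: nat set) EG VT ET r col.
      is_graph VG EG \<and> tree_model d C VG EG VT ET r col \<longrightarrow>
        (let L = T1_labels VG EG ET col in
          {a \<in> VT. sat VT ET L (\<lambda>_. a) \<nu>} = VG
          \<and> (\<forall>a\<in>VG. \<forall>b\<in>VG. a \<noteq> b \<longrightarrow>
               (EG a b \<longleftrightarrow> sat VT ET L (\<lambda>i. if i = 0 then a else b) \<eta>)))"
proof -
  obtain cs where "set cs = C"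
    using finite_list \<open>finite C\<close> by blast
  show ?thesis
  proof (rule exI[of _ "vertex_fm cs"], rule exI[of _ "edge_fm d cs"], intro allI impI)
    fix VG :: "nat set" and EG VT ET r col
    assume "is_graph VG EG \<and> tree_model d C VG EG VT ET r col"
    then have G: "is_graph VG EG" and tm: "tree_model d C VG EG VT ET r col"
      by auto
    show "let L = T1_labels VG EG ET col in
        {a \<in> VT. sat VT ET L (\<lambda>_. a) (vertex_fm cs)} = VG
        \<and> (\<forall>a\<in>VG. \<forall>b\<in>VG. a \<noteq> b \<longrightarrow>
             (EG a b \<longleftrightarrow> sat VT ET L (\<lambda>i. if i = 0 then a else b) (edge_fm d cs)))"
      using tree_model_vertex_fm[OF tm \<open>set cs = C\<close>] tree_model_edge_fm[OF G tm \<open>set cs = C\<close>]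
      by (simp add: Let_def)
  qed
qed

end
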